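(* Let $\mathcal{A}\subseteq\mathcal{B}$ be sub-$\sigma$-algebras of a complete probability space $(\Omega,\mathcal{F},P)$. Let $x:L_\infty(\mathcal{B})\to L_\infty(\mathcal{A})$ be an $\mathcal{A}$-homogeneous monotone linear operator that is continuous from above, and assume there is a constant $c>0$ with $x(1)\ge c$. Then there is a probability measure $Q\ll P$ on $(\Omega,\mathcal{B})$, with $f:=\frac{dQ}{dP}\in L^+_1(\mathcal{B})$, such that \[x(X)=x(1)E_Q[X\mid\mathcal{A}]=x(1)E\Big[X\frac{f}{E[f\mid\mathcal{A}]}\,\Big|\,\mathcal{A}\Big],\qquad X\in L_\infty(\mathcal{B}).\] Moreover, there is a unique $f=\frac{dQ}{dP}$ in $L^+_1(\mathcal{B})$ such that $E[f\mid\mathcal{A}]=1$ and $x(X)=x(1)E[fX\mid\mathcal{A}]$.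
   Context: All (in)equalities hold $P$-a.s. $\mathcal{A}$-homogeneous: $x(\lambda X)=\lambda x(X)$ for all $\lambda\in L^+_\infty(\mathcal{A})$, $X\in L_\infty(\mathcal{B})$. Monotone: $X\ge X'\Rightarrow x(X)\ge x(X')$. Continuous from above: for every nonincreasing sequence $X_n$ with $P$-a.s. limit $X$, $x(X_n)\downarrow x(X)$ $P$-a.s. *)

theory Defs
  imports "HOL-Probability.Probability"
begin

definition complete_ms :: "'a measure \<Rightarrow> bool" where
  "complete_ms M \<longleftrightarrow> (\<forall>N \<in> null_sets M. \<forall>S. S \<subseteq> N \<longrightarrow> S \<in> sets M)"

text \<open>Elements of L_infinity are
  identified up to M-a.e. equality; all (in)equalities below are stated M-a.e.\<close>
definition Linf :: "'a measure \<Rightarrow> 'a measure \<Rightarrow> ('a \<Rightarrow> real) set" where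
  "Linf M B = {X. X \<in> borel_measurable B \<and> (\<exists>C. AE \<omega> in M. \<bar>X \<omega>\<bar> \<le> C)}"

end

theory Submission
  imports Defs
begin

(* Dividing by x(1) reduces the theorem to an operator y with y(1) = 1. The set function
   S |-> E[y(1_S)] on B is finitely additive and, by continuity from above, countably additive:
   it is a probability Q << P with density f = dQ/dP. Linearity and monotone limits extend
   E[f X] = E[y X] from indicators to all bounded X; applied to 1_S X with S in A and combined
   with A-homogeneity this gives E[f X | A] = y X. In particular E[f | A] = 1, so Q and P agree
   on A and E_Q[X | A] = E[f X | A] = y X. Any other such density has the same integral against
   every bounded X, hence equals f almost everywhere (test with X = sgn(g - f)). *)

section \<open>Essentially bounded functions\<close>

lemma LinfI: "X \<in> borel_measurable B \<Longrightarrow> (AE \<omega> in M. \<bar>X \<omega>\<bar> \<le> C) \<Longrightarrow> X \<in> Linf M B"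
  unfolding Linf_def by auto

lemma Linf_borel_measurable: "X \<in> Linf M B \<Longrightarrow> X \<in> borel_measurable B"
  unfolding Linf_def by auto

lemma LinfE:
  assumes "X \<in> Linf M B"
  obtains C where "0 \<le> C" "AE \<omega> in M. \<bar>X \<omega>\<bar> \<le> C"
proof -
  from assms obtain C where "AE \<omega> in M. \<bar>X \<omega>\<bar> \<le> C" unfolding Linf_def by auto
  moreover from this have "AE \<omega> in M. \<bar>X \<omega>\<bar> \<le> \<bar>C\<bar>" by eventually_elim auto
  ultimately show thesis using that[of "\<bar>C\<bar>"] by simp
qed

lemma Linf_bounded:
  "X \<in> borel_measurable B \<Longrightarrow> (\<And>\<omega>. \<omega> \<in> space M \<Longrightarrow> \<bar>X \<omega>\<bar> \<le> C) \<Longrightarrow> X \<in> Linf M B"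
  by (rule LinfI) (auto intro: AE_I2)

lemma Linf_const: "(\<lambda>_. a) \<in> Linf M B"
  by (rule Linf_bounded[where C="\<bar>a\<bar>"]) auto

lemma Linf_indicator: "S \<in> sets B \<Longrightarrow> (indicator S :: 'a \<Rightarrow> real) \<in> Linf M B"
  by (rule Linf_bounded[where C=1]) (auto split: split_indicator)

lemma Linf_AE_eq_bounded:
  assumes "X \<in> Linf M B"
  obtains X' C where "X' \<in> borel_measurable B" "\<And>\<omega>. \<bar>X' \<omega>\<bar> \<le> C" "AE \<omega> in M. X' \<omega> = X \<omega>"
proof -
  obtain C where "0 \<le> C" and C: "AE \<omega> in M. \<bar>X \<omega>\<bar> \<le> C" using assms by (rule LinfE)
  have [measurable]: "X \<in> borel_measurable B" using assms by (rule Linf_borel_measurable)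
  show thesis
  proof (rule that[of "\<lambda>\<omega>. max (- C) (min C (X \<omega>))" C])
    show "AE \<omega> in M. max (- C) (min C (X \<omega>)) = X \<omega>"
      using C by eventually_elim auto
  qed (use \<open>0 \<le> C\<close> in auto)
qed

lemma Linf_add:
  assumes "X \<in> Linf M B" "Y \<in> Linf M B"
  shows "(\<lambda>\<omega>. X \<omega> + Y \<omega>) \<in> Linf M B"
proof -
  obtain C D where "AE \<omega> in M. \<bar>X \<omega>\<bar> \<le> C" "AE \<omega> in M. \<bar>Y \<omega>\<bar> \<le> D"
    using assms by (metis LinfE)
  then have "AE \<omega> in M. \<bar>X \<omega> + Y \<omega>\<bar> \<le> C + D" by eventually_elim auto
  moreover have "X \<in> borel_measurable B" "Y \<in> borel_measurable B"
    using assms by (auto dest: Linf_borel_measurable)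
  ultimately show ?thesis by (intro LinfI) auto
qed

lemma Linf_mult:
  assumes "X \<in> Linf M B" "Y \<in> Linf M B"
  shows "(\<lambda>\<omega>. X \<omega> * Y \<omega>) \<in> Linf M B"
proof -
  obtain C D where "AE \<omega> in M. \<bar>X \<omega>\<bar> \<le> C" "AE \<omega> in M. \<bar>Y \<omega>\<bar> \<le> D"
    using assms by (metis LinfE)
  then have "AE \<omega> in M. \<bar>X \<omega> * Y \<omega>\<bar> \<le> C * D"
    by eventually_elim (auto simp: abs_mult intro: mult_mono)
  moreover have "X \<in> borel_measurable B" "Y \<in> borel_measurable B"
    using assms by (auto dest: Linf_borel_measurable)
  ultimately show ?thesis by (intro LinfI) auto
qed

lemma Linf_cmult: "X \<in> Linf M B \<Longrightarrow> (\<lambda>\<omega>. a * X \<omega>) \<in> Linf M B"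
  using Linf_mult[OF Linf_const] .

lemma Linf_uminus: "X \<in> Linf M B \<Longrightarrow> (\<lambda>\<omega>. - X \<omega>) \<in> Linf M B"
  using Linf_cmult[of X M B "-1"] by simp

lemma Linf_subalgebra: "subalgebra B A \<Longrightarrow> X \<in> Linf M A \<Longrightarrow> X \<in> Linf M B"
  unfolding Linf_def using measurable_from_subalg by blast

lemma integrable_mult_Linf:
  fixes g :: "'a \<Rightarrow> real"
  assumes "subalgebra M B" "integrable M g" "X \<in> Linf M B"
  shows "integrable M (\<lambda>\<omega>. g \<omega> * X \<omega>)"
proof -
  obtain C where "0 \<le> C" and C: "AE \<omega> in M. \<bar>X \<omega>\<bar> \<le> C" using assms(3) by (rule LinfE)
  show ?thesis
  proof (rule Bochner_Integration.integrable_bound[where f="\<lambda>\<omega>. C * g \<omega>"])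
    show "AE \<omega> in M. norm (g \<omega> * X \<omega>) \<le> norm (C * g \<omega>)"
      using C
    proof eventually_elim
      case (elim \<omega>)
      have "\<bar>g \<omega>\<bar> * \<bar>X \<omega>\<bar> \<le> \<bar>g \<omega>\<bar> * C" using elim by (simp add: mult_left_mono)
      with \<open>0 \<le> C\<close> show ?case by (simp add: abs_mult mult.commute)
    qed
    show "(\<lambda>\<omega>. g \<omega> * X \<omega>) \<in> borel_measurable M"
      using borel_measurable_integrable[OF assms(2)]
        measurable_from_subalg[OF assms(1) Linf_borel_measurable[OF assms(3)]]
      by (rule borel_measurable_times)
  qed (use assms(2) in simp)
qed

lemma (in finite_measure) integrable_Linf:
  assumes "subalgebra M B" "X \<in> Linf M B"
  shows "integrable M X"
  using integrable_mult_Linf[OF assms(1) integrable_const assms(2), of 1] by simp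

lemma (in sigma_finite_measure) density_enn2real_RN_deriv:
  assumes "finite_measure N" "absolutely_continuous M N" "sets N = sets M"
  shows "density M (\<lambda>\<omega>. ennreal (enn2real (RN_deriv M N \<omega>))) = N"
proof -
  interpret N: finite_measure N by fact
  have "AE \<omega> in M. RN_deriv M N \<omega> \<noteq> \<infinity>"
    by (rule RN_deriv_finite[OF N.sigma_finite_measure_axioms assms(2,3)])
  then have "AE \<omega> in M. RN_deriv M N \<omega> = ennreal (enn2real (RN_deriv M N \<omega>))"
    by eventually_elim (simp add: less_top)
  then have "density M (RN_deriv M N) = density M (\<lambda>\<omega>. ennreal (enn2real (RN_deriv M N \<omega>)))"
    by (rule density_cong[rotated 2]) measurable
  with density_RN_deriv[OF assms(2,3)] show ?thesis by simp
qed

lemma (in sigma_finite_measure) integrable_enn2real_RN_deriv: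
  assumes "finite_measure N" "absolutely_continuous M N" "sets N = sets M"
  shows "integrable M (\<lambda>\<omega>. enn2real (RN_deriv M N \<omega>))"
proof -
  interpret N: finite_measure N by fact
  have "integrable N (\<lambda>_. 1::real)" by (rule N.integrable_const)
  then have "integrable M (\<lambda>\<omega>. enn2real (RN_deriv M N \<omega>) * 1)"
    by (subst (asm) RN_deriv_integrable[OF N.sigma_finite_measure_axioms assms(2,3)]) simp_all
  then show ?thesis by simp
qed

lemma AE_transfer_subalgebra:
  assumes "subalgebra M F" "subalgebra N F"
    and "\<And>D. D \<in> sets F \<Longrightarrow> emeasure N D = emeasure M D"
    and "Measurable.pred F P" "AE \<omega> in N. P \<omega>"
  shows "AE \<omega> in M. P \<omega>"
proof -
  have "restr_to_subalg N F = restr_to_subalg M F"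
    using assms(1-3) by (intro measure_eqI) (simp_all add: sets_restr_to_subalg emeasure_restr_to_subalg)
  moreover have "AE \<omega> in restr_to_subalg N F. P \<omega>"
    using AE_restr_to_subalg2[OF assms(2,5,4)] .
  ultimately have "AE \<omega> in restr_to_subalg M F. P \<omega>" by metis
  then show ?thesis by (rule AE_restr_to_subalg[OF assms(1)])
qed

lemma AE_incseq_between:
  fixes Xs :: "nat \<Rightarrow> 'a \<Rightarrow> real"
  assumes "AE \<omega> in M. \<forall>n. Xs n \<omega> \<le> Xs (Suc n) \<omega>" "AE \<omega> in M. (\<lambda>n. Xs n \<omega>) \<longlonglongrightarrow> X \<omega>"
  shows "AE \<omega> in M. Xs 0 \<omega> \<le> Xs n \<omega> \<and> Xs n \<omega> \<le> X \<omega>"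
  using assms
proof eventually_elim
  case (elim \<omega>)
  then have inc: "incseq (\<lambda>n. Xs n \<omega>)" by (simp add: incseq_SucI)
  show ?case using incseq_le[OF inc elim(2)] incseqD[OF inc, of 0 n] by simp
qed

lemma AE_eq_if_integral_mult_Linf_eq:
  fixes f g :: "'a \<Rightarrow> real"
  assumes B: "subalgebra M B" and [measurable]: "f \<in> borel_measurable B" "g \<in> borel_measurable B"
    and f: "integrable M f" and g: "integrable M g"
    and eq: "\<And>X. X \<in> Linf M B \<Longrightarrow> (\<integral>\<omega>. f \<omega> * X \<omega> \<partial>M) = (\<integral>\<omega>. g \<omega> * X \<omega> \<partial>M)"
  shows "AE \<omega> in M. f \<omega> = g \<omega>"
proof -
  define X where "X \<omega> = sgn (f \<omega> - g \<omega>)" for \<omega>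
  have "X \<in> borel_measurable B" unfolding X_def by measurable
  then have X: "X \<in> Linf M B"
    by (rule Linf_bounded[where C=1]) (simp add: X_def sgn_if)
  have "(\<integral>\<omega>. \<bar>f \<omega> - g \<omega>\<bar> \<partial>M) = (\<integral>\<omega>. f \<omega> * X \<omega> - g \<omega> * X \<omega> \<partial>M)"
    by (rule Bochner_Integration.integral_cong) (auto simp: X_def sgn_if algebra_simps)
  also have "\<dots> = 0"
    using eq[OF X] integrable_mult_Linf[OF B f X] integrable_mult_Linf[OF B g X] by simp
  finally have "AE \<omega> in M. \<bar>f \<omega> - g \<omega>\<bar> = 0"
    using integral_nonneg_eq_0_iff_AE[of M "\<lambda>\<omega>. \<bar>f \<omega> - g \<omega>\<bar>"] f g by auto
  then show ?thesis by eventually_elim simp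
qed

section \<open>Normalised operators and their representing density\<close>

locale cond_exp_operator = prob_space M
  for M :: "'a measure" +
  fixes A B :: "'a measure" and y :: "('a \<Rightarrow> real) \<Rightarrow> 'a \<Rightarrow> real"
  assumes subalg_B: "subalgebra M B"
    and subalg_A: "subalgebra B A"
    and Linf_y: "\<And>X. X \<in> Linf M B \<Longrightarrow> y X \<in> Linf M A"
    and y_add: "\<And>X Y. X \<in> Linf M B \<Longrightarrow> Y \<in> Linf M B \<Longrightarrow>
        AE \<omega> in M. y (\<lambda>\<eta>. X \<eta> + Y \<eta>) \<omega> = y X \<omega> + y Y \<omega>"
    and y_cmult: "\<And>X a. X \<in> Linf M B \<Longrightarrow> AE \<omega> in M. y (\<lambda>\<eta>. a * X \<eta>) \<omega> = a * y X \<omega>"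
    and y_homogeneous: "\<And>l X. l \<in> Linf M A \<Longrightarrow> (AE \<omega> in M. 0 \<le> l \<omega>) \<Longrightarrow> X \<in> Linf M B \<Longrightarrow>
        AE \<omega> in M. y (\<lambda>\<eta>. l \<eta> * X \<eta>) \<omega> = l \<omega> * y X \<omega>"
    and y_mono: "\<And>X X'. X \<in> Linf M B \<Longrightarrow> X' \<in> Linf M B \<Longrightarrow>
        (AE \<omega> in M. X' \<omega> \<le> X \<omega>) \<Longrightarrow> AE \<omega> in M. y X' \<omega> \<le> y X \<omega>"
    and y_continuous_from_above: "\<And>Xs X. (\<And>n. Xs n \<in> Linf M B) \<Longrightarrow> X \<in> Linf M B \<Longrightarrow>
        (AE \<omega> in M. \<forall>n. Xs (Suc n) \<omega> \<le> Xs n \<omega>) \<Longrightarrow>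
        (AE \<omega> in M. (\<lambda>n. Xs n \<omega>) \<longlonglongrightarrow> X \<omega>) \<Longrightarrow>
        AE \<omega> in M. (\<lambda>n. y (Xs n) \<omega>) \<longlonglongrightarrow> y X \<omega>"
    and y_one: "AE \<omega> in M. y (\<lambda>_. 1) \<omega> = 1"
begin

lemma subalg_MA: "subalgebra M A"
  using subalg_A subalg_B unfolding subalgebra_def by auto

lemma sigma_finite_subalgebra_A: "sigma_finite_subalgebra M A"
  by (intro finite_measure_subalgebra_is_sigma_finite finite_measure_subalgebra.intro
      finite_measure_subalgebra_axioms.intro finite_measure_axioms subalg_MA)

lemma space_B: "space B = space M"
  using subalg_A subalg_B unfolding subalgebra_def by auto

lemma sets_A_subset_B: "S \<in> sets A \<Longrightarrow> S \<in> sets B"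
  and sets_B_subset_M: "S \<in> sets B \<Longrightarrow> S \<in> sets M"
  using subalg_A subalg_B unfolding subalgebra_def by auto

lemma borel_measurable_B: "X \<in> borel_measurable B \<Longrightarrow> X \<in> borel_measurable M"
  using measurable_from_subalg[OF subalg_B] .

lemma y_borel_measurable_A: "X \<in> Linf M B \<Longrightarrow> y X \<in> borel_measurable A"
  using Linf_y Linf_borel_measurable by blast

lemma y_borel_measurable: "X \<in> Linf M B \<Longrightarrow> y X \<in> borel_measurable M"
  using y_borel_measurable_A measurable_from_subalg[OF subalg_MA] by blast

lemma integrable_y: "X \<in> Linf M B \<Longrightarrow> integrable M (y X)"
  using integrable_Linf[OF subalg_MA Linf_y] .

lemma y_cong:
  assumes "X \<in> Linf M B" "X' \<in> Linf M B" "AE \<omega> in M. X' \<omega> = X \<omega>"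
  shows "AE \<omega> in M. y X' \<omega> = y X \<omega>"
proof -
  have "AE \<omega> in M. X' \<omega> \<le> X \<omega>" "AE \<omega> in M. X \<omega> \<le> X' \<omega>"
    using assms(3) by (eventually_elim, simp)+
  then have "AE \<omega> in M. y X' \<omega> \<le> y X \<omega>" "AE \<omega> in M. y X \<omega> \<le> y X' \<omega>"
    using assms(1,2) by (simp_all add: y_mono)
  then show ?thesis by eventually_elim auto
qed

lemma y_const: "AE \<omega> in M. y (\<lambda>_. a) \<omega> = a"
  using y_cmult[of "\<lambda>_. 1" a, OF Linf_const] y_one by eventually_elim simp

lemma y_nonneg:
  assumes "X \<in> Linf M B" "AE \<omega> in M. 0 \<le> X \<omega>"
  shows "AE \<omega> in M. 0 \<le> y X \<omega>"
  using y_mono[OF assms(1) Linf_const assms(2)] y_const[of 0] by eventually_elim auto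

lemma y_uminus: "X \<in> Linf M B \<Longrightarrow> AE \<omega> in M. y (\<lambda>\<eta>. - X \<eta>) \<omega> = - y X \<omega>"
  using y_cmult[of X "-1"] by simp

lemma integral_y_const: "(\<integral>\<omega>. y (\<lambda>_. a) \<omega> \<partial>M) = a"
proof -
  have "(\<integral>\<omega>. y (\<lambda>_. a) \<omega> \<partial>M) = (\<integral>\<omega>. a \<partial>M)"
    using y_const y_borel_measurable[OF Linf_const] by (intro integral_cong_AE) auto
  then show ?thesis by (simp add: prob_space)
qed

definition Q :: "'a measure" where
  "Q = measure_of (space M) (sets B) (\<lambda>S. ennreal (\<integral>\<omega>. y (indicator S) \<omega> \<partial>M))"

lemma y_indicator_bounds:
  assumes "S \<in> sets B"
  shows "AE \<omega> in M. 0 \<le> y (indicator S) \<omega> \<and> y (indicator S) \<omega> \<le> 1"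
proof -
  have "AE \<omega> in M. 0 \<le> y (indicator S) \<omega>"
    by (rule y_nonneg[OF Linf_indicator[OF assms]]) (simp add: AE_I2)
  moreover have "AE \<omega> in M. y (indicator S) \<omega> \<le> y (\<lambda>_. 1) \<omega>"
    by (rule y_mono[OF Linf_const Linf_indicator[OF assms]]) (simp add: AE_I2 split: split_indicator)
  ultimately show ?thesis using y_one by eventually_elim auto
qed

lemma integral_y_indicator_nonneg: "S \<in> sets B \<Longrightarrow> 0 \<le> (\<integral>\<omega>. y (indicator S) \<omega> \<partial>M)"
  by (rule integral_nonneg_AE, drule y_indicator_bounds) (auto elim: AE_mp)

lemma integral_y_indicator_Un:
  assumes "S \<in> sets B" "T \<in> sets B" "S \<inter> T = {}"
  shows "(\<integral>\<omega>. y (indicator (S \<union> T)) \<omega> \<partial>M)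
    = (\<integral>\<omega>. y (indicator S) \<omega> \<partial>M) + (\<integral>\<omega>. y (indicator T) \<omega> \<partial>M)"
proof -
  have "indicator (S \<union> T) = (\<lambda>\<eta>. indicator S \<eta> + indicator T \<eta> :: real)"
    using assms(3) by (auto simp: fun_eq_iff split: split_indicator)
  then have "AE \<omega> in M. y (indicator (S \<union> T)) \<omega> = y (indicator S) \<omega> + y (indicator T) \<omega>"
    using y_add[OF Linf_indicator[OF assms(1)] Linf_indicator[OF assms(2)]] by simp
  moreover have "integrable M (y (indicator S))" "integrable M (y (indicator T))"
    "integrable M (y (indicator (S \<union> T)))"
    using assms by (simp_all add: integrable_y Linf_indicator)
  ultimately show ?thesis
    by (simp add: integral_cong_AE[of _ M "\<lambda>\<omega>. y (indicator S) \<omega> + y (indicator T) \<omega>"])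
qed

lemma integral_y_indicator_tendsto_0:
  assumes "range As \<subseteq> sets B" "decseq As" "(\<Inter>i. As i) = {}"
  shows "(\<lambda>i. \<integral>\<omega>. y (indicator (As i)) \<omega> \<partial>M) \<longlonglongrightarrow> 0"
proof -
  have As: "\<And>i. As i \<in> sets B" using assms(1) by auto
  have lim_indicator: "AE \<omega> in M. (\<lambda>i. indicator (As i) \<omega> :: real) \<longlonglongrightarrow> 0"
  proof (intro AE_I2 tendsto_eventually)
    fix \<omega>
    obtain n where "\<omega> \<notin> As n" using assms(3) by auto
    then have "\<forall>m\<ge>n. \<omega> \<notin> As m" using assms(2) by (auto simp: decseq_def)
    then show "\<forall>\<^sub>F i in sequentially. indicator (As i) \<omega> = (0::real)"
      by (auto simp: eventually_sequentially intro!: exI[of _ n])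
  qed
  have "AE \<omega> in M. \<forall>n. indicator (As (Suc n)) \<omega> \<le> (indicator (As n) \<omega> :: real)"
    using assms(2) by (intro AE_I2) (auto simp: decseq_Suc_iff split: split_indicator)
  from y_continuous_from_above[OF Linf_indicator[OF As] Linf_const this lim_indicator]
  have lim: "AE \<omega> in M. (\<lambda>i. y (indicator (As i)) \<omega>) \<longlonglongrightarrow> 0"
    using y_const[of 0] by eventually_elim simp
  have "(\<lambda>i. \<integral>\<omega>. y (indicator (As i)) \<omega> \<partial>M) \<longlonglongrightarrow> (\<integral>\<omega>. 0 \<partial>M)"
  proof (rule integral_dominated_convergence[where w="\<lambda>_. 1"])
    show "AE \<omega> in M. norm (y (indicator (As i)) \<omega>) \<le> 1" for i
      using y_indicator_bounds[OF As[of i]] by eventually_elim auto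
  qed (use lim y_borel_measurable[OF Linf_indicator[OF As]] in simp_all)
  then show ?thesis by simp
qed

lemma positive_integral_y_indicator:
  "positive (sets B) (\<lambda>S. ennreal (\<integral>\<omega>. y (indicator S) \<omega> \<partial>M))"
proof -
  have "(indicator {} :: 'a \<Rightarrow> real) = (\<lambda>_. 0)" by (rule ext) simp
  then show ?thesis using integral_y_const[of 0] by (simp add: positive_def)
qed

lemma countably_additive_integral_y_indicator:
  "countably_additive (sets B) (\<lambda>S. ennreal (\<integral>\<omega>. y (indicator S) \<omega> \<partial>M))"
proof (rule ring_of_sets.empty_continuous_imp_countably_additive)
  show "ring_of_sets (space B) (sets B)"
    by (simp add: algebra.axioms(1) sets.algebra_axioms)
  show "additive (sets B) (\<lambda>S. ennreal (\<integral>\<omega>. y (indicator S) \<omega> \<partial>M))"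
    by (auto simp: additive_def integral_y_indicator_Un integral_y_indicator_nonneg ennreal_plus)
  show "(\<lambda>i. ennreal (\<integral>\<omega>. y (indicator (As i)) \<omega> \<partial>M)) \<longlonglongrightarrow> 0"
    if "range As \<subseteq> sets B" "decseq As" "(\<Inter>i. As i) = {}" for As
    using tendsto_ennrealI[OF integral_y_indicator_tendsto_0[OF that]] by simp
qed (rule positive_integral_y_indicator, simp)

lemma sets_Q [measurable_cong]: "sets Q = sets B"
  unfolding Q_def using space_B sets.sets_measure_of_eq[of B] by simp

lemma space_Q: "space Q = space M"
  unfolding Q_def using space_B sets.space_measure_of_eq[of B] by simp

lemma emeasure_Q: "S \<in> sets B \<Longrightarrow> emeasure Q S = ennreal (\<integral>\<omega>. y (indicator S) \<omega> \<partial>M)"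
  unfolding Q_def using space_B emeasure_measure_of_sigma[OF sets.sigma_algebra_axioms
      positive_integral_y_indicator countably_additive_integral_y_indicator]
  by simp

lemma prob_space_Q: "prob_space Q"
proof (rule prob_spaceI)
  have top: "space M \<in> sets B" using sets.top[of B] space_B by simp
  have "AE \<omega> in M. y (indicator (space M)) \<omega> = y (\<lambda>_. 1) \<omega>"
    by (rule y_cong[OF Linf_const Linf_indicator[OF top]]) (simp add: AE_I2)
  then have "(\<integral>\<omega>. y (indicator (space M)) \<omega> \<partial>M) = (\<integral>\<omega>. y (\<lambda>_. 1) \<omega> \<partial>M)"
    by (intro integral_cong_AE y_borel_measurable Linf_const Linf_indicator top)
  then show "emeasure Q (space Q) = 1"
    by (simp add: space_Q emeasure_Q[OF top] integral_y_const)
qed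

lemma finite_measure_Q: "finite_measure Q"
  using prob_space_Q by (rule prob_space.axioms(1))

lemma absolutely_continuous_Q: "absolutely_continuous (restr_to_subalg M B) Q"
  unfolding absolutely_continuous_def
proof
  fix S assume "S \<in> null_sets (restr_to_subalg M B)"
  then have S: "S \<in> null_sets M" "S \<in> sets B" using null_sets_restr_to_subalg[OF subalg_B] by auto
  have "AE \<omega> in M. indicator S \<omega> = (0::real)"
    using AE_not_in[OF S(1)] by eventually_elim simp
  then have "AE \<omega> in M. y (indicator S) \<omega> = y (\<lambda>_. 0) \<omega>"
    by (rule y_cong[OF Linf_const Linf_indicator[OF S(2)]])
  then have "AE \<omega> in M. y (indicator S) \<omega> = 0"
    using y_const[of 0] by eventually_elim simp
  then have "emeasure Q S = 0"
    by (simp add: emeasure_Q[OF S(2)] integral_eq_zero_AE)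
  then show "S \<in> null_sets Q" using S(2) by (simp add: null_setsI sets_Q)
qed

lemma sigma_finite_restr_B: "sigma_finite_measure (restr_to_subalg M B)"
  using finite_measure_restr_to_subalg[OF subalg_B finite_measure_axioms]
  by (rule finite_measure.axioms(1))

lemma sets_Q_restr_B: "sets Q = sets (restr_to_subalg M B)"
  by (simp add: sets_Q sets_restr_to_subalg[OF subalg_B])

definition dQ :: "'a \<Rightarrow> real" where
  "dQ \<omega> = enn2real (RN_deriv (restr_to_subalg M B) Q \<omega>)"

lemma dQ_nonneg: "0 \<le> dQ \<omega>"
  by (simp add: dQ_def)

lemma dQ_borel_measurable [measurable]: "dQ \<in> borel_measurable B"
  unfolding dQ_def by (rule measurable_in_subalg'[OF subalg_B]) measurable

lemma density_dQ: "density (restr_to_subalg M B) (\<lambda>\<omega>. ennreal (dQ \<omega>)) = Q"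
  unfolding dQ_def
  using sigma_finite_measure.density_enn2real_RN_deriv[OF sigma_finite_restr_B
      finite_measure_Q absolutely_continuous_Q sets_Q_restr_B] .

lemma integrable_dQ: "integrable M dQ"
  unfolding dQ_def
  using sigma_finite_measure.integrable_enn2real_RN_deriv[OF sigma_finite_restr_B
      finite_measure_Q absolutely_continuous_Q sets_Q_restr_B]
  by (rule integrable_from_subalg[OF subalg_B])

lemma integrable_dQ_mult: "X \<in> Linf M B \<Longrightarrow> integrable M (\<lambda>\<omega>. dQ \<omega> * X \<omega>)"
  using integrable_mult_Linf[OF subalg_B integrable_dQ] .

lemma integral_Q:
  assumes "X \<in> Linf M B"
  shows "integrable Q X" "(\<integral>\<omega>. X \<omega> \<partial>Q) = (\<integral>\<omega>. dQ \<omega> * X \<omega> \<partial>M)"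
proof -
  interpret MB: sigma_finite_measure "restr_to_subalg M B" by (rule sigma_finite_restr_B)
  have [measurable]: "X \<in> borel_measurable B" using assms by (rule Linf_borel_measurable)
  have X: "X \<in> borel_measurable (restr_to_subalg M B)"
    by (rule measurable_in_subalg[OF subalg_B]) measurable
  note RN = MB.RN_deriv_integrable[OF finite_measure.axioms(1)[OF finite_measure_Q]
      absolutely_continuous_Q sets_Q_restr_B X]
    MB.RN_deriv_integral[OF finite_measure.axioms(1)[OF finite_measure_Q]
      absolutely_continuous_Q sets_Q_restr_B X]
  have "integrable (restr_to_subalg M B) (\<lambda>\<omega>. dQ \<omega> * X \<omega>)"
    by (rule integrable_in_subalg[OF subalg_B _ integrable_dQ_mult[OF assms]]) measurable
  then show "integrable Q X" using RN(1) by (simp add: dQ_def)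
  have "(\<integral>\<omega>. X \<omega> \<partial>Q) = (\<integral>\<omega>. dQ \<omega> * X \<omega> \<partial>restr_to_subalg M B)"
    using RN(2) by (simp add: dQ_def)
  also have "\<dots> = (\<integral>\<omega>. dQ \<omega> * X \<omega> \<partial>M)"
    by (rule integral_subalgebra2[OF subalg_B]) measurable
  finally show "(\<integral>\<omega>. X \<omega> \<partial>Q) = (\<integral>\<omega>. dQ \<omega> * X \<omega> \<partial>M)" .
qed

lemma integral_dQ_indicator:
  assumes "S \<in> sets B"
  shows "(\<integral>\<omega>. dQ \<omega> * indicator S \<omega> \<partial>M) = (\<integral>\<omega>. y (indicator S) \<omega> \<partial>M)"
proof -
  have "(\<integral>\<omega>. dQ \<omega> * indicator S \<omega> \<partial>M) = measure Q S"
    using integral_Q(2)[OF Linf_indicator[OF assms]] assms by (simp add: sets_Q)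
  also have "\<dots> = (\<integral>\<omega>. y (indicator S) \<omega> \<partial>M)"
    using emeasure_Q[OF assms] integral_y_indicator_nonneg[OF assms] by (simp add: measure_def)
  finally show ?thesis .
qed

lemma y_continuous_from_below:
  assumes Xs: "\<And>n. Xs n \<in> Linf M B" and X: "X \<in> Linf M B"
    and mono: "AE \<omega> in M. \<forall>n. Xs n \<omega> \<le> Xs (Suc n) \<omega>"
    and lim: "AE \<omega> in M. (\<lambda>n. Xs n \<omega>) \<longlonglongrightarrow> X \<omega>"
  shows "AE \<omega> in M. (\<lambda>n. y (Xs n) \<omega>) \<longlonglongrightarrow> y X \<omega>"
proof -
  have "AE \<omega> in M. \<forall>n. - Xs (Suc n) \<omega> \<le> - Xs n \<omega>"
    using mono by eventually_elim simp
  moreover have "AE \<omega> in M. (\<lambda>n. - Xs n \<omega>) \<longlonglongrightarrow> - X \<omega>"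
    using lim by eventually_elim (rule tendsto_minus)
  ultimately have "AE \<omega> in M. (\<lambda>n. y (\<lambda>\<eta>. - Xs n \<eta>) \<omega>) \<longlonglongrightarrow> y (\<lambda>\<eta>. - X \<eta>) \<omega>"
    by (rule y_continuous_from_above[OF Linf_uminus[OF Xs] Linf_uminus[OF X]])
  moreover have "AE \<omega> in M. \<forall>n. y (\<lambda>\<eta>. - Xs n \<eta>) \<omega> = - y (Xs n) \<omega>"
    by (simp add: AE_all_countable y_uminus[OF Xs])
  moreover have "AE \<omega> in M. y (\<lambda>\<eta>. - X \<eta>) \<omega> = - y X \<omega>"
    by (rule y_uminus[OF X])
  ultimately show ?thesis
    by eventually_elim (simp add: tendsto_minus_cancel_left[symmetric])
qed

lemma integral_y_tendsto:
  assumes Xs: "\<And>n. Xs n \<in> Linf M B" and X: "X \<in> Linf M B"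
    and mono: "AE \<omega> in M. \<forall>n. Xs n \<omega> \<le> Xs (Suc n) \<omega>"
    and lim: "AE \<omega> in M. (\<lambda>n. Xs n \<omega>) \<longlonglongrightarrow> X \<omega>"
  shows "(\<lambda>n. \<integral>\<omega>. y (Xs n) \<omega> \<partial>M) \<longlonglongrightarrow> (\<integral>\<omega>. y X \<omega> \<partial>M)"
proof (rule integral_dominated_convergence[where w="\<lambda>\<omega>. \<bar>y (Xs 0) \<omega>\<bar> + \<bar>y X \<omega>\<bar>"])
  show "AE \<omega> in M. norm (y (Xs n) \<omega>) \<le> \<bar>y (Xs 0) \<omega>\<bar> + \<bar>y X \<omega>\<bar>" for n
  proof -
    have "AE \<omega> in M. Xs 0 \<omega> \<le> Xs n \<omega>" "AE \<omega> in M. Xs n \<omega> \<le> X \<omega>"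
      using AE_incseq_between[OF mono lim, of n] by (eventually_elim, simp)+
    with y_mono[OF Xs Xs] y_mono[OF X Xs]
    have "AE \<omega> in M. y (Xs 0) \<omega> \<le> y (Xs n) \<omega>" "AE \<omega> in M. y (Xs n) \<omega> \<le> y X \<omega>"
      by blast+
    then show ?thesis by eventually_elim auto
  qed
qed (use assms y_continuous_from_below y_borel_measurable integrable_y in auto)

lemma integral_dQ_mult_tendsto:
  assumes Xs: "\<And>n. Xs n \<in> Linf M B" and X: "X \<in> Linf M B"
    and mono: "AE \<omega> in M. \<forall>n. Xs n \<omega> \<le> Xs (Suc n) \<omega>"
    and lim: "AE \<omega> in M. (\<lambda>n. Xs n \<omega>) \<longlonglongrightarrow> X \<omega>"
  shows "(\<lambda>n. \<integral>\<omega>. dQ \<omega> * Xs n \<omega> \<partial>M) \<longlonglongrightarrow> (\<integral>\<omega>. dQ \<omega> * X \<omega> \<partial>M)"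
proof (rule integral_dominated_convergence
    [where w="\<lambda>\<omega>. \<bar>dQ \<omega> * Xs 0 \<omega>\<bar> + \<bar>dQ \<omega> * X \<omega>\<bar>"])
  show "AE \<omega> in M. norm (dQ \<omega> * Xs n \<omega>) \<le> \<bar>dQ \<omega> * Xs 0 \<omega>\<bar> + \<bar>dQ \<omega> * X \<omega>\<bar>" for n
    using AE_incseq_between[OF mono lim, of n]
  proof eventually_elim
    case (elim \<omega>)
    then have "\<bar>Xs n \<omega>\<bar> \<le> \<bar>Xs 0 \<omega>\<bar> + \<bar>X \<omega>\<bar>" by linarith
    then have "dQ \<omega> * \<bar>Xs n \<omega>\<bar> \<le> dQ \<omega> * (\<bar>Xs 0 \<omega>\<bar> + \<bar>X \<omega>\<bar>)"
      using dQ_nonneg by (rule mult_left_mono)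
    then show ?case using dQ_nonneg[of \<omega>] by (simp add: abs_mult distrib_left)
  qed
  show "AE \<omega> in M. (\<lambda>n. dQ \<omega> * Xs n \<omega>) \<longlonglongrightarrow> dQ \<omega> * X \<omega>"
    using lim by eventually_elim (rule tendsto_mult_left)
qed (use integrable_dQ_mult[OF Xs] integrable_dQ_mult[OF X] in auto)

lemma integral_dQ_mult_eq_add:
  assumes X: "X \<in> Linf M B" and Y: "Y \<in> Linf M B"
    and "(\<integral>\<omega>. dQ \<omega> * X \<omega> \<partial>M) = (\<integral>\<omega>. y X \<omega> \<partial>M)"
    and "(\<integral>\<omega>. dQ \<omega> * Y \<omega> \<partial>M) = (\<integral>\<omega>. y Y \<omega> \<partial>M)"
  shows "(\<integral>\<omega>. dQ \<omega> * (X \<omega> + Y \<omega>) \<partial>M) = (\<integral>\<omega>. y (\<lambda>\<eta>. X \<eta> + Y \<eta>) \<omega> \<partial>M)"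
proof -
  have "(\<integral>\<omega>. y (\<lambda>\<eta>. X \<eta> + Y \<eta>) \<omega> \<partial>M) = (\<integral>\<omega>. y X \<omega> + y Y \<omega> \<partial>M)"
    using y_add[OF X Y] y_borel_measurable[OF Linf_add[OF X Y]] y_borel_measurable[OF X]
      y_borel_measurable[OF Y]
    by (intro integral_cong_AE) auto
  with assms(3,4) show ?thesis
    by (simp add: distrib_left integrable_dQ_mult[OF X] integrable_dQ_mult[OF Y]
        integrable_y[OF X] integrable_y[OF Y])
qed

lemma integral_dQ_mult_eq_cmult:
  assumes X: "X \<in> Linf M B" and "(\<integral>\<omega>. dQ \<omega> * X \<omega> \<partial>M) = (\<integral>\<omega>. y X \<omega> \<partial>M)"
  shows "(\<integral>\<omega>. dQ \<omega> * (a * X \<omega>) \<partial>M) = (\<integral>\<omega>. y (\<lambda>\<eta>. a * X \<eta>) \<omega> \<partial>M)"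
proof -
  have "(\<integral>\<omega>. y (\<lambda>\<eta>. a * X \<eta>) \<omega> \<partial>M) = (\<integral>\<omega>. a * y X \<omega> \<partial>M)"
    using y_cmult[OF X, of a] y_borel_measurable[OF X] y_borel_measurable[OF Linf_cmult[OF X]]
    by (intro integral_cong_AE) auto
  with assms(2) show ?thesis by (simp add: mult.left_commute)
qed

lemma integral_dQ_mult_nonneg:
  assumes "u \<in> borel_measurable B" "\<And>\<omega>. 0 \<le> u \<omega>" "\<And>\<omega>. \<omega> \<in> space M \<Longrightarrow> u \<omega> \<le> C"
  shows "(\<integral>\<omega>. dQ \<omega> * u \<omega> \<partial>M) = (\<integral>\<omega>. y u \<omega> \<partial>M)"
  using assms
proof (induction u arbitrary: C rule: borel_measurable_induct_real)
  case (set S)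
  then show ?case by (intro integral_dQ_indicator)
next
  case (mult u c)
  show ?case
  proof (cases "c = 0")
    case True
    then show ?thesis using integral_y_const[of 0] by simp
  next
    case False
    with mult have "\<And>\<omega>. \<omega> \<in> space M \<Longrightarrow> u \<omega> \<le> C / c"
      by (simp add: le_divide_eq mult.commute)
    with mult show ?thesis
      by (intro integral_dQ_mult_eq_cmult) (auto intro!: Linf_bounded[where C="C / c"])
  qed
next
  case (add u v)
  then have ub: "\<And>\<omega>. \<omega> \<in> space M \<Longrightarrow> u \<omega> \<le> C" "\<And>\<omega>. \<omega> \<in> space M \<Longrightarrow> v \<omega> \<le> C"
    by (smt (verit))+
  with add have "v \<in> Linf M B" "u \<in> Linf M B"
    by (auto intro!: Linf_bounded[where C=C])
  with add.IH(2)[OF ub(2)] add.IH(1)[OF ub(1)] show ?case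
    by (intro integral_dQ_mult_eq_add)
next
  case (seq U)
  have U_le: "U i \<omega> \<le> u \<omega>" if "\<omega> \<in> space M" for i \<omega>
    using seq.hyps(3,4) that by (intro incseq_le) (auto simp: incseq_def le_fun_def space_B)
  then have U_bound: "\<And>\<omega>. \<omega> \<in> space M \<Longrightarrow> U i \<omega> \<le> C" for i
    using seq.prems order_trans by blast
  have u: "u \<in> Linf M B" and U: "\<And>i. U i \<in> Linf M B"
    using seq U_bound assms(1,2) by (auto intro!: Linf_bounded[where C=C])
  have mono: "AE \<omega> in M. \<forall>n. U n \<omega> \<le> U (Suc n) \<omega>" and lim: "AE \<omega> in M. (\<lambda>n. U n \<omega>) \<longlonglongrightarrow> u \<omega>"
    using seq.hyps(3,4) by (auto intro!: AE_I2 simp: incseq_Suc_iff le_fun_def space_B)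
  have "(\<lambda>i. \<integral>\<omega>. y (U i) \<omega> \<partial>M) \<longlonglongrightarrow> (\<integral>\<omega>. dQ \<omega> * u \<omega> \<partial>M)"
    using integral_dQ_mult_tendsto[OF U u mono lim] seq.IH[OF U_bound] by simp
  with integral_y_tendsto[OF U u mono lim] show ?case
    by (rule LIMSEQ_unique[rotated])
qed

lemma integral_dQ: "(\<integral>\<omega>. dQ \<omega> \<partial>M) = 1"
  using integral_Q(2)[OF Linf_const[of 1]] prob_space.prob_space[OF prob_space_Q] by simp

lemma integral_dQ_mult:
  assumes "X \<in> Linf M B"
  shows "(\<integral>\<omega>. dQ \<omega> * X \<omega> \<partial>M) = (\<integral>\<omega>. y X \<omega> \<partial>M)"
proof -
  obtain X' C where [measurable]: "X' \<in> borel_measurable B"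
    and bound: "\<And>\<omega>. \<bar>X' \<omega>\<bar> \<le> C" and eq: "AE \<omega> in M. X' \<omega> = X \<omega>"
    using Linf_AE_eq_bounded[OF assms] by blast
  have X': "X' \<in> Linf M B" using bound by (intro Linf_bounded) auto
  define u where "u \<omega> = X' \<omega> + C" for \<omega>
  have u: "u \<in> Linf M B" unfolding u_def using Linf_add[OF X' Linf_const] .
  have "(\<integral>\<omega>. dQ \<omega> * u \<omega> \<partial>M) = (\<integral>\<omega>. y u \<omega> \<partial>M)"
  proof (rule integral_dQ_mult_nonneg[where C="2 * C"])
    show "0 \<le> u \<omega>" "u \<omega> \<le> 2 * C" for \<omega>
      using bound[of \<omega>] by (auto simp: u_def abs_le_iff)
  qed (simp add: u_def)
  moreover have "(\<integral>\<omega>. dQ \<omega> * u \<omega> \<partial>M) = (\<integral>\<omega>. dQ \<omega> * X' \<omega> \<partial>M) + C"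
    using integrable_dQ_mult[OF X'] integrable_dQ integral_dQ by (simp add: u_def distrib_left)
  moreover have "(\<integral>\<omega>. y u \<omega> \<partial>M) = (\<integral>\<omega>. y X' \<omega> + y (\<lambda>_. C) \<omega> \<partial>M)"
    using y_add[OF X' Linf_const] y_borel_measurable[OF u] y_borel_measurable[OF X']
      y_borel_measurable[OF Linf_const]
    unfolding u_def by (intro integral_cong_AE) auto
  ultimately have "(\<integral>\<omega>. dQ \<omega> * X' \<omega> \<partial>M) = (\<integral>\<omega>. y X' \<omega> \<partial>M)"
    using integrable_y[OF X'] integrable_y[OF Linf_const] integral_y_const[of C] by simp
  moreover have "(\<integral>\<omega>. dQ \<omega> * X \<omega> \<partial>M) = (\<integral>\<omega>. dQ \<omega> * X' \<omega> \<partial>M)"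
    using eq integrable_dQ_mult[OF X'] integrable_dQ_mult[OF assms] by (intro integral_cong_AE) auto
  moreover have "(\<integral>\<omega>. y X \<omega> \<partial>M) = (\<integral>\<omega>. y X' \<omega> \<partial>M)"
    using y_cong[OF X' assms eq[THEN AE_mp, OF AE_I2]] y_borel_measurable[OF X'] y_borel_measurable[OF assms]
    by (intro integral_cong_AE) auto
  ultimately show ?thesis by simp
qed

lemma integral_y_indicator_mult:
  assumes S: "S \<in> sets A" and X: "X \<in> Linf M B"
  shows "(\<integral>\<omega>. y (\<lambda>\<eta>. indicator S \<eta> * X \<eta>) \<omega> \<partial>M) = (\<integral>\<omega>. indicator S \<omega> * y X \<omega> \<partial>M)"
proof (rule integral_cong_AE)
  show "AE \<omega> in M. y (\<lambda>\<eta>. indicator S \<eta> * X \<eta>) \<omega> = indicator S \<omega> * y X \<omega>"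
    by (rule y_homogeneous[OF Linf_indicator[OF S] _ X]) (simp add: AE_I2)
  show "y (\<lambda>\<eta>. indicator S \<eta> * X \<eta>) \<in> borel_measurable M"
    by (rule y_borel_measurable[OF Linf_mult[OF Linf_indicator[OF sets_A_subset_B[OF S]] X]])
  show "(\<lambda>\<omega>. indicator S \<omega> * y X \<omega>) \<in> borel_measurable M"
    using sets_B_subset_M[OF sets_A_subset_B[OF S]] y_borel_measurable[OF X] by measurable
qed

lemma cond_exp_dQ_mult:
  assumes X: "X \<in> Linf M B"
  shows "AE \<omega> in M. real_cond_exp M A (\<lambda>\<eta>. dQ \<eta> * X \<eta>) \<omega> = y X \<omega>"
proof (rule sigma_finite_subalgebra.real_cond_exp_charact[OF sigma_finite_subalgebra_A])
  fix S assume S: "S \<in> sets A"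
  have SX: "(\<lambda>\<eta>. indicator S \<eta> * X \<eta>) \<in> Linf M B"
    using Linf_mult[OF Linf_indicator[OF sets_A_subset_B[OF S]] X] .
  have "(\<integral>\<omega>\<in>S. dQ \<omega> * X \<omega> \<partial>M) = (\<integral>\<omega>. dQ \<omega> * (indicator S \<omega> * X \<omega>) \<partial>M)"
    by (simp add: set_lebesgue_integral_def mult.left_commute)
  also have "\<dots> = (\<integral>\<omega>. indicator S \<omega> * y X \<omega> \<partial>M)"
    using integral_dQ_mult[OF SX] integral_y_indicator_mult[OF S X] by simp
  also have "\<dots> = (\<integral>\<omega>\<in>S. y X \<omega> \<partial>M)"
    by (simp add: set_lebesgue_integral_def)
  finally show "(\<integral>\<omega>\<in>S. dQ \<omega> * X \<omega> \<partial>M) = (\<integral>\<omega>\<in>S. y X \<omega> \<partial>M)" .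
qed (use integrable_dQ_mult[OF X] integrable_y[OF X] y_borel_measurable_A[OF X] in auto)

lemma cond_exp_dQ: "AE \<omega> in M. real_cond_exp M A dQ \<omega> = 1"
  using cond_exp_dQ_mult[OF Linf_const[of 1]] y_one by eventually_elim simp

lemma integral_dQ_mult_A_measurable:
  assumes Z: "Z \<in> Linf M A"
  shows "(\<integral>\<omega>. dQ \<omega> * Z \<omega> \<partial>M) = (\<integral>\<omega>. Z \<omega> \<partial>M)"
proof -
  have ZB: "Z \<in> Linf M B" using Linf_subalgebra[OF subalg_A Z] .
  have [measurable]: "Z \<in> borel_measurable A" using Z by (rule Linf_borel_measurable)
  have int: "integrable M (\<lambda>\<omega>. Z \<omega> * dQ \<omega>)"
    using integrable_dQ_mult[OF ZB] by (simp add: mult.commute)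
  have "(\<integral>\<omega>. Z \<omega> * real_cond_exp M A dQ \<omega> \<partial>M) = (\<integral>\<omega>. Z \<omega> * dQ \<omega> \<partial>M)"
    using sigma_finite_subalgebra.real_cond_exp_intg(2)[OF sigma_finite_subalgebra_A int]
      borel_measurable_B[OF dQ_borel_measurable] by simp
  moreover have "(\<integral>\<omega>. Z \<omega> * real_cond_exp M A dQ \<omega> \<partial>M) = (\<integral>\<omega>. Z \<omega> \<partial>M)"
    using cond_exp_dQ borel_measurable_B[OF Linf_borel_measurable[OF ZB]]
    by (intro integral_cong_AE) (auto elim: AE_mp)
  ultimately show ?thesis by (simp add: mult.commute)
qed

lemma emeasure_Q_A: "D \<in> sets A \<Longrightarrow> emeasure Q D = emeasure M D"
  using integral_Q(2)[OF Linf_indicator[OF sets_A_subset_B]]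
    integral_dQ_mult_A_measurable[OF Linf_indicator]
    finite_measure.emeasure_eq_measure[OF finite_measure_Q]
    sets_A_subset_B sets_B_subset_M
  by (simp add: emeasure_eq_measure sets_Q)

lemma cond_exp_Q:
  assumes X: "X \<in> Linf M B"
  shows "AE \<omega> in M. real_cond_exp Q A X \<omega> = y X \<omega>"
proof -
  have subalg_QA: "subalgebra Q A"
    using subalg_A by (simp add: subalgebra_def sets_Q space_Q space_B)
  interpret QA: sigma_finite_subalgebra Q A
    using finite_measure_subalgebra_is_sigma_finite finite_measure_subalgebra.intro
      finite_measure_Q finite_measure_subalgebra_axioms.intro subalg_QA by blast
  have yXB: "y X \<in> Linf M B" using Linf_subalgebra[OF subalg_A Linf_y[OF X]] .
  have "AE \<omega> in Q. real_cond_exp Q A X \<omega> = y X \<omega>"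
  proof (rule QA.real_cond_exp_charact)
    fix S assume S: "S \<in> sets A"
    have 1: "indicator S \<in> Linf M B" using Linf_indicator[OF sets_A_subset_B[OF S]] .
    have "(\<integral>\<omega>\<in>S. X \<omega> \<partial>Q) = (\<integral>\<omega>. dQ \<omega> * (indicator S \<omega> * X \<omega>) \<partial>M)"
      using integral_Q(2)[OF Linf_mult[OF 1 X]] by (simp add: set_lebesgue_integral_def)
    also have "\<dots> = (\<integral>\<omega>. indicator S \<omega> * y X \<omega> \<partial>M)"
      using integral_dQ_mult[OF Linf_mult[OF 1 X]] integral_y_indicator_mult[OF S X] by simp
    also have "\<dots> = (\<integral>\<omega>. dQ \<omega> * (indicator S \<omega> * y X \<omega>) \<partial>M)"
      using integral_dQ_mult_A_measurable[OF Linf_mult[OF Linf_indicator[OF S] Linf_y[OF X]]] by simp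
    also have "\<dots> = (\<integral>\<omega>\<in>S. y X \<omega> \<partial>Q)"
      using integral_Q(2)[OF Linf_mult[OF 1 yXB]] by (simp add: set_lebesgue_integral_def)
    finally show "(\<integral>\<omega>\<in>S. X \<omega> \<partial>Q) = (\<integral>\<omega>\<in>S. y X \<omega> \<partial>Q)" .
  qed (use integral_Q(1)[OF X] integral_Q(1)[OF yXB] y_borel_measurable_A[OF X] in auto)
  moreover have "Measurable.pred A (\<lambda>\<omega>. real_cond_exp Q A X \<omega> = y X \<omega>)"
    using y_borel_measurable_A[OF X] by measurable
  ultimately show ?thesis
    by (intro AE_transfer_subalgebra[OF subalg_MA subalg_QA emeasure_Q_A])
qed

lemma dQ_unique:
  assumes [measurable]: "g \<in> borel_measurable B" and "integrable M g"
    and g: "\<And>X. X \<in> Linf M B \<Longrightarrow> AE \<omega> in M. real_cond_exp M A (\<lambda>\<eta>. g \<eta> * X \<eta>) \<omega> = y X \<omega>"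
  shows "AE \<omega> in M. g \<omega> = dQ \<omega>"
proof (rule AE_eq_if_integral_mult_Linf_eq[OF subalg_B assms(1) dQ_borel_measurable assms(2) integrable_dQ])
  fix X assume X: "X \<in> Linf M B"
  have "AE \<omega> in M. real_cond_exp M A (\<lambda>\<eta>. g \<eta> * X \<eta>) \<omega> = real_cond_exp M A (\<lambda>\<eta>. dQ \<eta> * X \<eta>) \<omega>"
    using g[OF X] cond_exp_dQ_mult[OF X] by eventually_elim simp
  then have "(\<integral>\<omega>. real_cond_exp M A (\<lambda>\<eta>. g \<eta> * X \<eta>) \<omega> \<partial>M)
      = (\<integral>\<omega>. real_cond_exp M A (\<lambda>\<eta>. dQ \<eta> * X \<eta>) \<omega> \<partial>M)"
    by (intro integral_cong_AE) auto
  then show "(\<integral>\<omega>. g \<omega> * X \<omega> \<partial>M) = (\<integral>\<omega>. dQ \<omega> * X \<omega> \<partial>M)"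
    using sigma_finite_subalgebra.real_cond_exp_int(2)[OF sigma_finite_subalgebra_A]
      integrable_mult_Linf[OF subalg_B assms(2) X] integrable_dQ_mult[OF X] by simp
qed

end

locale monotone_cond_operator = prob_space M
  for M :: "'a measure" +
  fixes A B :: "'a measure" and x :: "('a \<Rightarrow> real) \<Rightarrow> 'a \<Rightarrow> real" and c :: real
  assumes subB: "subalgebra M B"
    and subA: "subalgebra B A"
    and maps: "\<And>X. X \<in> Linf M B \<Longrightarrow> x X \<in> Linf M A"
    and additive: "\<And>X Y. X \<in> Linf M B \<Longrightarrow> Y \<in> Linf M B \<Longrightarrow>
        AE \<omega> in M. x (\<lambda>\<eta>. X \<eta> + Y \<eta>) \<omega> = x X \<omega> + x Y \<omega>"
    and scalar: "\<And>X (a::real). X \<in> Linf M B \<Longrightarrow>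
        AE \<omega> in M. x (\<lambda>\<eta>. a * X \<eta>) \<omega> = a * x X \<omega>"
    and A_homog: "\<And>l X. l \<in> Linf M A \<Longrightarrow> (AE \<omega> in M. 0 \<le> l \<omega>) \<Longrightarrow> X \<in> Linf M B \<Longrightarrow>
        AE \<omega> in M. x (\<lambda>\<eta>. l \<eta> * X \<eta>) \<omega> = l \<omega> * x X \<omega>"
    and monotone: "\<And>X X'. X \<in> Linf M B \<Longrightarrow> X' \<in> Linf M B \<Longrightarrow>
        (AE \<omega> in M. X' \<omega> \<le> X \<omega>) \<Longrightarrow> AE \<omega> in M. x X' \<omega> \<le> x X \<omega>"
    and cont_above: "\<And>Xs X. (\<And>n. Xs n \<in> Linf M B) \<Longrightarrow> X \<in> Linf M B \<Longrightarrow>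
        (AE \<omega> in M. \<forall>n. Xs (Suc n) \<omega> \<le> Xs n \<omega>) \<Longrightarrow>
        (AE \<omega> in M. (\<lambda>n. Xs n \<omega>) \<longlonglongrightarrow> X \<omega>) \<Longrightarrow>
        AE \<omega> in M. (\<forall>n. x (Xs (Suc n)) \<omega> \<le> x (Xs n) \<omega>) \<and> (\<lambda>n. x (Xs n) \<omega>) \<longlonglongrightarrow> x X \<omega>"
    and c_pos: "c > 0"
    and x1_ge: "AE \<omega> in M. c \<le> x (\<lambda>_. 1) \<omega>"
begin

definition normalized :: "('a \<Rightarrow> real) \<Rightarrow> 'a \<Rightarrow> real" where
  "normalized X \<omega> = x X \<omega> / x (\<lambda>_. 1) \<omega>"

lemma x_eq_normalized: "AE \<omega> in M. x X \<omega> = x (\<lambda>_. 1) \<omega> * normalized X \<omega>"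
  using x1_ge by eventually_elim (use c_pos in \<open>simp add: normalized_def\<close>)

lemma Linf_normalized:
  assumes X: "X \<in> Linf M B"
  shows "normalized X \<in> Linf M A"
proof -
  obtain C where "0 \<le> C" and C: "AE \<omega> in M. \<bar>x X \<omega>\<bar> \<le> C" using maps[OF X] by (rule LinfE)
  show ?thesis
  proof (rule LinfI)
    show "normalized X \<in> borel_measurable A"
      using Linf_borel_measurable[OF maps[OF X]] Linf_borel_measurable[OF maps[OF Linf_const]]
      unfolding normalized_def[abs_def] by measurable
    show "AE \<omega> in M. \<bar>normalized X \<omega>\<bar> \<le> C / c"
      using C x1_ge
    proof eventually_elim
      case (elim \<omega>)
      with c_pos \<open>0 \<le> C\<close> have "\<bar>x X \<omega>\<bar> / x (\<lambda>_. 1) \<omega> \<le> C / c"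
        by (intro frac_le) auto
      with elim c_pos show ?case by (simp add: normalized_def abs_div)
    qed
  qed
qed

sublocale N: cond_exp_operator M A B normalized
proof
  show "normalized X \<in> Linf M A" if "X \<in> Linf M B" for X
    using that by (rule Linf_normalized)
  show "AE \<omega> in M. normalized (\<lambda>\<eta>. X \<eta> + Y \<eta>) \<omega> = normalized X \<omega> + normalized Y \<omega>"
    if "X \<in> Linf M B" "Y \<in> Linf M B" for X Y
    using additive[OF that] by eventually_elim (simp add: normalized_def add_divide_distrib)
  show "AE \<omega> in M. normalized (\<lambda>\<eta>. a * X \<eta>) \<omega> = a * normalized X \<omega>" if "X \<in> Linf M B" for X a
    using scalar[OF that, of a] by eventually_elim (simp add: normalized_def)
  show "AE \<omega> in M. normalized (\<lambda>\<eta>. l \<eta> * X \<eta>) \<omega> = l \<omega> * normalized X \<omega>"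
    if "l \<in> Linf M A" "AE \<omega> in M. 0 \<le> l \<omega>" "X \<in> Linf M B" for l X
    using A_homog[OF that] by eventually_elim (simp add: normalized_def)
  show "AE \<omega> in M. normalized X' \<omega> \<le> normalized X \<omega>"
    if "X \<in> Linf M B" "X' \<in> Linf M B" "AE \<omega> in M. X' \<omega> \<le> X \<omega>" for X X'
    using monotone[OF that] x1_ge
    by eventually_elim (use c_pos in \<open>simp add: normalized_def divide_right_mono\<close>)
  show "AE \<omega> in M. (\<lambda>n. normalized (Xs n) \<omega>) \<longlonglongrightarrow> normalized X \<omega>"
    if "\<And>n. Xs n \<in> Linf M B" "X \<in> Linf M B" "AE \<omega> in M. \<forall>n. Xs (Suc n) \<omega> \<le> Xs n \<omega>"
      "AE \<omega> in M. (\<lambda>n. Xs n \<omega>) \<longlonglongrightarrow> X \<omega>" for Xs X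
    using cont_above[OF that] x1_ge
    by eventually_elim (use c_pos in \<open>auto simp: normalized_def intro!: tendsto_divide\<close>)
  show "AE \<omega> in M. normalized (\<lambda>_. 1) \<omega> = 1"
    using x1_ge by eventually_elim (use c_pos in \<open>simp add: normalized_def\<close>)
qed (use subB subA in auto)

lemma x_eq_cond_exp:
  assumes X: "X \<in> Linf M B"
  shows "AE \<omega> in M. x X \<omega> = x (\<lambda>_. 1) \<omega> * real_cond_exp N.Q A X \<omega>
      \<and> x X \<omega> = x (\<lambda>_. 1) \<omega> * real_cond_exp M A (\<lambda>\<eta>. X \<eta> * (N.dQ \<eta> / real_cond_exp M A N.dQ \<eta>)) \<omega>"
proof -
  have "AE \<omega> in M. X \<omega> * (N.dQ \<omega> / real_cond_exp M A N.dQ \<omega>) = N.dQ \<omega> * X \<omega>"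
    using N.cond_exp_dQ by eventually_elim simp
  then have "AE \<omega> in M. real_cond_exp M A (\<lambda>\<eta>. X \<eta> * (N.dQ \<eta> / real_cond_exp M A N.dQ \<eta>)) \<omega>
      = real_cond_exp M A (\<lambda>\<eta>. N.dQ \<eta> * X \<eta>) \<omega>"
    using N.borel_measurable_B[OF Linf_borel_measurable[OF X]] N.borel_measurable_B[OF N.dQ_borel_measurable]
    by (intro sigma_finite_subalgebra.real_cond_exp_cong[OF N.sigma_finite_subalgebra_A]) auto
  with x_eq_normalized N.cond_exp_Q[OF X] N.cond_exp_dQ_mult[OF X]
  show ?thesis by eventually_elim simp
qed

lemma x_eq_cond_exp_dQ_mult:
  assumes "X \<in> Linf M B"
  shows "AE \<omega> in M. x X \<omega> = x (\<lambda>_. 1) \<omega> * real_cond_exp M A (\<lambda>\<eta>. N.dQ \<eta> * X \<eta>) \<omega>"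
  using x_eq_normalized[of X] N.cond_exp_dQ_mult[OF assms] by eventually_elim simp

lemma dQ_unique:
  assumes "g \<in> borel_measurable B" "integrable M g"
    and g: "\<forall>X \<in> Linf M B. AE \<omega> in M. x X \<omega> = x (\<lambda>_. 1) \<omega> * real_cond_exp M A (\<lambda>\<eta>. g \<eta> * X \<eta>) \<omega>"
  shows "AE \<omega> in M. g \<omega> = N.dQ \<omega>"
proof (rule N.dQ_unique[OF assms(1,2)])
  fix X assume "X \<in> Linf M B"
  with g have "AE \<omega> in M. x X \<omega> = x (\<lambda>_. 1) \<omega> * real_cond_exp M A (\<lambda>\<eta>. g \<eta> * X \<eta>) \<omega>" ..
  with x_eq_normalized[of X] x1_ge
  show "AE \<omega> in M. real_cond_exp M A (\<lambda>\<eta>. g \<eta> * X \<eta>) \<omega> = normalized X \<omega>"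
    by eventually_elim (use c_pos in auto)
qed

end

theorem theorem3p3:
  fixes M A B :: "'a measure"
    and x :: "('a \<Rightarrow> real) \<Rightarrow> ('a \<Rightarrow> real)"
    and c :: real
  assumes prob: "prob_space M"
    and complete: "complete_ms M"
    and subB: "subalgebra M B"
    and subA: "subalgebra B A"
    and maps: "\<And>X. X \<in> Linf M B \<Longrightarrow> x X \<in> Linf M A"
    and additive: "\<And>X Y. X \<in> Linf M B \<Longrightarrow> Y \<in> Linf M B \<Longrightarrow>
        AE \<omega> in M. x (\<lambda>\<eta>. X \<eta> + Y \<eta>) \<omega> = x X \<omega> + x Y \<omega>"
    and scalar: "\<And>X (a::real). X \<in> Linf M B \<Longrightarrow>
        AE \<omega> in M. x (\<lambda>\<eta>. a * X \<eta>) \<omega> = a * x X \<omega>"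
    and A_homog: "\<And>l X. l \<in> Linf M A \<Longrightarrow> (AE \<omega> in M. 0 \<le> l \<omega>) \<Longrightarrow> X \<in> Linf M B \<Longrightarrow>
        AE \<omega> in M. x (\<lambda>\<eta>. l \<eta> * X \<eta>) \<omega> = l \<omega> * x X \<omega>"
    and monotone: "\<And>X X'. X \<in> Linf M B \<Longrightarrow> X' \<in> Linf M B \<Longrightarrow>
        (AE \<omega> in M. X' \<omega> \<le> X \<omega>) \<Longrightarrow> AE \<omega> in M. x X' \<omega> \<le> x X \<omega>"
    and cont_above: "\<And>Xs X. (\<And>n. Xs n \<in> Linf M B) \<Longrightarrow> X \<in> Linf M B \<Longrightarrow>
        (AE \<omega> in M. \<forall>n. Xs (Suc n) \<omega> \<le> Xs n \<omega>) \<Longrightarrow>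
        (AE \<omega> in M. (\<lambda>n. Xs n \<omega>) \<longlonglongrightarrow> X \<omega>) \<Longrightarrow>
        AE \<omega> in M. (\<forall>n. x (Xs (Suc n)) \<omega> \<le> x (Xs n) \<omega>) \<and> (\<lambda>n. x (Xs n) \<omega>) \<longlonglongrightarrow> x X \<omega>"
    and c_pos: "c > 0"
    and x1_ge: "AE \<omega> in M. c \<le> x (\<lambda>_. 1) \<omega>"
  shows "(\<exists>Q f. prob_space Q \<and> sets Q = sets B \<and> space Q = space M
            \<and> f \<in> borel_measurable B \<and> (\<forall>\<omega>. 0 \<le> f \<omega>) \<and> integrable M f
            \<and> Q = density (restr_to_subalg M B) (\<lambda>\<omega>. ennreal (f \<omega>))
            \<and> absolutely_continuous (restr_to_subalg M B) Q
            \<and> (\<forall>X \<in> Linf M B. AE \<omega> in M.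
                 x X \<omega> = x (\<lambda>_. 1) \<omega> * real_cond_exp Q A X \<omega>
               \<and> x X \<omega> = x (\<lambda>_. 1) \<omega> *
                   real_cond_exp M A (\<lambda>\<eta>. X \<eta> * (f \<eta> / real_cond_exp M A f \<eta>)) \<omega>))
       \<and> (\<exists>f. f \<in> borel_measurable B \<and> (\<forall>\<omega>. 0 \<le> f \<omega>) \<and> integrable M f
            \<and> prob_space (density (restr_to_subalg M B) (\<lambda>\<omega>. ennreal (f \<omega>)))
            \<and> (AE \<omega> in M. real_cond_exp M A f \<omega> = 1)
            \<and> (\<forall>X \<in> Linf M B. AE \<omega> in M.
                 x X \<omega> = x (\<lambda>_. 1) \<omega> * real_cond_exp M A (\<lambda>\<eta>. f \<eta> * X \<eta>) \<omega>)
            \<and> (\<forall>g. g \<in> borel_measurable B \<and> (AE \<omega> in M. 0 \<le> g \<omega>) \<and> integrable M g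
                 \<and> (AE \<omega> in M. real_cond_exp M A g \<omega> = 1)
                 \<and> (\<forall>X \<in> Linf M B. AE \<omega> in M.
                      x X \<omega> = x (\<lambda>_. 1) \<omega> * real_cond_exp M A (\<lambda>\<eta>. g \<eta> * X \<eta>) \<omega>)
                 \<longrightarrow> (AE \<omega> in M. g \<omega> = f \<omega>)))"
proof -
  interpret monotone_cond_operator M A B x c
    using assms by (simp add: monotone_cond_operator_def monotone_cond_operator_axioms_def)
  show ?thesis
    by (intro conjI exI[of _ N.Q] exI[of _ N.dQ] allI impI ballI)
      (simp_all add: N.prob_space_Q N.sets_Q N.space_Q N.dQ_nonneg N.integrable_dQ N.density_dQ
        N.absolutely_continuous_Q N.cond_exp_dQ x_eq_cond_exp x_eq_cond_exp_dQ_mult dQ_unique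
        del: AE_conj_iff times_divide_eq_right)
qed

end
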